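(* If $p\in\mathbb{C}[\lambda]$, $m,k\in\mathcal{A}$, and $u,v\in\mathcal{A}\bar\otimes\mathcal{A}^{\mathrm{op}}$, then \[ \tau(\partial p(m)\#k)=\tau(p'(m)\,k)\quad\text{and}\quad\tau(\Delta_{u,v}p(m))=(\tau\bar\otimes\tau^{\mathrm{op}})\big(v^{\mathrm{flip}}\,\partial p'(m)\,u\big). \]
   Context: $(\mathcal{A},\tau)$ is a von Neumann algebra with faithful normal tracial state $\tau$; $\mathcal{A}^{\mathrm{op}}$ its opposite algebra; $\mathcal{A}\bar\otimes\mathcal{A}^{\mathrm{op}}$ the von Neumann tensor product with trace $\tau\bar\otimes\tau^{\mathrm{op}}$ (products taken there); $(a\otimes b)^{\mathrm{flip}}=b\otimes a$ extended $\sigma$-weakly continuously; $(a\otimes b)\#c=acb$ extended linearly. For $g(\lambda)=\sum_ic_i\lambda^i$, $\partial g(m)=\sum_ic_i\sum_{\delta_1+\delta_2=i-1}m^{\delta_1}\otimes m^{\delta_2}$, and $\Delta_{u,v}g(m)$ is the unique element of $\mathcal{A}$ such that for all $a\in\mathcal{A}$ \[ \tau(a\,\Delta_{u,v}g(m))=\sum_ic_i\sum_{\delta_1+\delta_2+\delta_3=i-2}(\tau\bar\otimes\tau^{\mathrm{op}})\big((a\otimes1)(m\otimes1)^{\delta_1}(uv^{\mathrm{flip}}+vu^{\mathrm{flip}})(1\otimes m)^{\delta_2}(m\otimes1)^{\delta_3}\big). \] *)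

theory Defs
  imports "HOL-Analysis.Analysis" "HOL-Computational_Algebra.Polynomial"
begin

text \<open>The algebra A is a type 'a with ring
operations, a complex scalar multiplication sA and an involution st.  The von Neumann
tensor product A (tensor) A^op is a type 'b (topologised by its sigma-weak topology)
with scalar multiplication sB, the elementary tensor map ten, the trace tau2 and the map flip.\<close>

definition complex_alg :: "(complex \<Rightarrow> 'a::ring_1 \<Rightarrow> 'a) \<Rightarrow> bool" where
  "complex_alg sc \<longleftrightarrow>
     (\<forall>c d x. sc c (sc d x) = sc (c * d) x) \<and> (\<forall>x. sc 1 x = x) \<and>
     (\<forall>c d x. sc (c + d) x = sc c x + sc d x) \<and>
     (\<forall>c x y. sc c (x + y) = sc c x + sc c y) \<and>
     (\<forall>c x y. sc c (x * y) = sc c x * y) \<and>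
     (\<forall>c x y. sc c (x * y) = x * sc c y)"

definition clinear_fun :: "(complex \<Rightarrow> 'a \<Rightarrow> 'a) \<Rightarrow> (complex \<Rightarrow> 'b \<Rightarrow> 'b)
    \<Rightarrow> ('a::plus \<Rightarrow> 'b::plus) \<Rightarrow> bool" where
  "clinear_fun sX sY f \<longleftrightarrow>
     (\<forall>x y. f (x + y) = f x + f y) \<and> (\<forall>c x. f (sX c x) = sY c (f x))"

definition star_alg :: "(complex \<Rightarrow> 'a::ring_1 \<Rightarrow> 'a) \<Rightarrow> ('a \<Rightarrow> 'a) \<Rightarrow> bool" where
  "star_alg sc st \<longleftrightarrow> complex_alg sc \<and>
     (\<forall>x. st (st x) = x) \<and> (\<forall>x y. st (x + y) = st x + st y) \<and>
     (\<forall>c x. st (sc c x) = sc (cnj c) (st x)) \<and> (\<forall>x y. st (x * y) = st y * st x)"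

definition faithful_tracial_state ::
  "(complex \<Rightarrow> 'a::ring_1 \<Rightarrow> 'a) \<Rightarrow> ('a \<Rightarrow> 'a) \<Rightarrow> ('a \<Rightarrow> complex) \<Rightarrow> bool" where
  "faithful_tracial_state sc st \<tau> \<longleftrightarrow>
     clinear_fun sc (*) \<tau> \<and> \<tau> 1 = 1 \<and> (\<forall>x y. \<tau> (x * y) = \<tau> (y * x)) \<and>
     (\<forall>x. Im (\<tau> (st x * x)) = 0 \<and> Re (\<tau> (st x * x)) \<ge> 0) \<and>
     (\<forall>x. \<tau> (st x * x) = 0 \<longrightarrow> x = 0)"

text \<open>Algebraic tensor product inside 'b: finite sums of elementary tensors
  (scalars are absorbed into the first factor).\<close>
definition alg_tensor :: "('a \<Rightarrow> 'a \<Rightarrow> 'b::monoid_add) \<Rightarrow> 'b set" where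
  "alg_tensor ten = {sum_list (map (\<lambda>(a, b). ten a b) xs) | xs. True}"

definition vn_tensor_op ::
  "(complex \<Rightarrow> 'a::ring_1 \<Rightarrow> 'a) \<Rightarrow> ('a \<Rightarrow> complex) \<Rightarrow>
   (complex \<Rightarrow> 'b::{ring_1,t2_space} \<Rightarrow> 'b) \<Rightarrow> ('a \<Rightarrow> 'a \<Rightarrow> 'b) \<Rightarrow>
   ('b \<Rightarrow> complex) \<Rightarrow> ('b \<Rightarrow> 'b) \<Rightarrow> bool" where
  "vn_tensor_op sA \<tau> sB ten \<tau>2 flip \<longleftrightarrow>
     complex_alg sB \<and>
     (\<forall>a a' b. ten (a + a') b = ten a b + ten a' b) \<and>
     (\<forall>a b b'. ten a (b + b') = ten a b + ten a b') \<and>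
     (\<forall>c a b. ten (sA c a) b = sB c (ten a b)) \<and>
     (\<forall>c a b. ten a (sA c b) = sB c (ten a b)) \<and>
     (\<forall>a b c d. ten a b * ten c d = ten (a * c) (d * b)) \<and>
     ten 1 1 = 1 \<and>
     closure (alg_tensor ten) = UNIV \<and>
     (\<forall>y::'b. continuous_on UNIV (\<lambda>x. x * y)) \<and> (\<forall>y::'b. continuous_on UNIV (\<lambda>x. y * x)) \<and>
     (\<forall>y::'b. continuous_on UNIV (\<lambda>x. x + y)) \<and>
     clinear_fun sB (*) \<tau>2 \<and> continuous_on UNIV \<tau>2 \<and>
     (\<forall>x y. \<tau>2 (x * y) = \<tau>2 (y * x)) \<and>
     (\<forall>a b. \<tau>2 (ten a b) = \<tau> a * \<tau> b) \<and>
     clinear_fun sB sB flip \<and> continuous_on UNIV flip \<and>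
     (\<forall>a b. flip (ten a b) = ten b a)"

definition poly_eval :: "(complex \<Rightarrow> 'a::ring_1 \<Rightarrow> 'a) \<Rightarrow> complex poly \<Rightarrow> 'a \<Rightarrow> 'a" where
  "poly_eval sA g m = (\<Sum>i\<le>degree g. sA (coeff g i) (m ^ i))"

definition nc_deriv :: "(complex \<Rightarrow> 'b::ring_1 \<Rightarrow> 'b) \<Rightarrow> ('a::ring_1 \<Rightarrow> 'a \<Rightarrow> 'b)
    \<Rightarrow> complex poly \<Rightarrow> 'a \<Rightarrow> 'b" where
  "nc_deriv sB ten g m = (\<Sum>i\<le>degree g. sB (coeff g i)
      (\<Sum>(d1, d2)\<in>{(d1, d2). d1 + d2 + 1 = i}. ten (m ^ d1) (m ^ d2)))"

text \<open>dg(m) # k, where (a (x) b) # c = a c b is extended linearly.\<close>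
definition nc_deriv_hash :: "(complex \<Rightarrow> 'a::ring_1 \<Rightarrow> 'a) \<Rightarrow> complex poly \<Rightarrow> 'a \<Rightarrow> 'a \<Rightarrow> 'a" where
  "nc_deriv_hash sA g m k = (\<Sum>i\<le>degree g. sA (coeff g i)
      (\<Sum>(d1, d2)\<in>{(d1, d2). d1 + d2 + 1 = i}. m ^ d1 * k * m ^ d2))"

definition Delta_rhs :: "('a::ring_1 \<Rightarrow> 'a \<Rightarrow> 'b::ring_1) \<Rightarrow> ('b \<Rightarrow> complex) \<Rightarrow> ('b \<Rightarrow> 'b)
    \<Rightarrow> 'b \<Rightarrow> 'b \<Rightarrow> complex poly \<Rightarrow> 'a \<Rightarrow> 'a \<Rightarrow> complex" where
  "Delta_rhs ten \<tau>2 flip u v g m a = (\<Sum>i\<le>degree g. coeff g i *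
      (\<Sum>(d1, d2, d3)\<in>{(d1, d2, d3). d1 + d2 + d3 + 2 = i}.
         \<tau>2 (ten a 1 * ten m 1 ^ d1 * (u * flip v + v * flip u) * ten 1 m ^ d2 * ten m 1 ^ d3)))"

definition is_Delta :: "('a::ring_1 \<Rightarrow> complex) \<Rightarrow> ('a \<Rightarrow> 'a \<Rightarrow> 'b::ring_1) \<Rightarrow> ('b \<Rightarrow> complex)
    \<Rightarrow> ('b \<Rightarrow> 'b) \<Rightarrow> 'b \<Rightarrow> 'b \<Rightarrow> complex poly \<Rightarrow> 'a \<Rightarrow> 'a \<Rightarrow> bool" where
  "is_Delta \<tau> ten \<tau>2 flip u v g m d \<longleftrightarrow> (\<forall>a. \<tau> (a * d) = Delta_rhs ten \<tau>2 flip u v g m a)"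

end

theory Submission
  imports Defs
begin

text \<open>Both identities follow by expanding linearly and using the trace property term by
term.  In dp(m) # k, each of the i words m^d1 k m^d2 with d1 + d2 = i - 1 has trace
tau(m^(i-1) k), which yields the coefficients of p'.  For Delta take a = 1: cyclicity merges the
outer powers of m (x) 1, and since tau (x) tau^op is invariant under the anti-multiplicative
flip (both facts extend from elementary tensors by density and continuity), the v u^flip part
equals the u v^flip part with the two tensor legs exchanged.  A pair of exponents (e1, e2) with
e1 + e2 = i - 2 then arises from (e1 + 1) + (e2 + 1) = i triples (d1, d2, d3), which gives the
terms of dp'(m).\<close>

lemma sum_antidiagonal:
  "(\<Sum>(a, b)\<in>{(a, b). a + b = (n::nat)}. f a b) = (\<Sum>a\<le>n. f a (n - a))"
  by (rule sum.reindex_bij_witness[where i="\<lambda>a. (a, n - a)" and j=fst]) auto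

lemma sum_antidiagonal_swap:
  "(\<Sum>(a, b)\<in>{(a, b). a + b = (n::nat)}. f a b) = (\<Sum>(a, b)\<in>{(a, b). a + b = n}. f b a)"
  by (rule sum.reindex_bij_witness[where i="\<lambda>(a, b). (b, a)" and j="\<lambda>(a, b). (b, a)"]) auto

lemma sum_triples_merge_outer:
  fixes f :: "nat \<Rightarrow> nat \<Rightarrow> 'c::comm_semiring_1"
  shows "(\<Sum>(a, b, c)\<in>{(a, b, c). a + b + c = n}. f (a + c) b) =
         (\<Sum>(e, b)\<in>{(e, b). e + b = n}. of_nat (Suc e) * f e b)"
proof -
  have "(\<Sum>(a, b, c)\<in>{(a, b, c). a + b + c = n}. f (a + c) b) =
        (\<Sum>(b, a)\<in>Sigma {..n} (\<lambda>b. {..n - b}). f (n - b) b)"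
    by (rule sum.reindex_bij_witness
        [where i="\<lambda>(b, a). (a, b, n - b - a)" and j="\<lambda>(a, b, c). (b, a)"]) auto
  also have "\<dots> = (\<Sum>b\<le>n. of_nat (Suc (n - b)) * f (n - b) b)"
    by (subst sum.Sigma[symmetric]) auto
  also have "\<dots> = (\<Sum>e\<le>n. of_nat (Suc e) * f e (n - e))"
    by (rule sum.reindex_bij_witness[where i="\<lambda>e. n - e" and j="\<lambda>b. n - b"]) auto
  finally show ?thesis
    by (simp add: sum_antidiagonal)
qed

lemma sum_triples_symmetrized:
  fixes f :: "nat \<Rightarrow> nat \<Rightarrow> 'c::comm_semiring_1"
  shows "(\<Sum>(a, b, c)\<in>{(a, b, c). a + b + c + 2 = i}. f (a + c) b + f b (a + c)) =
         of_nat i * (\<Sum>(e1, e2)\<in>{(e1, e2). e1 + e2 + 1 = i - 1}. f e1 e2)"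
proof (cases "i < 2")
  case True
  then have no_triples: "{(a, b, c). a + b + c + 2 = i} = {}"
    by auto
  have "i = 0 \<or> {(e1, e2). e1 + e2 + 1 = i - 1} = {}"
    using True by auto
  then show ?thesis
    unfolding no_triples sum.empty by auto
next
  case False
  then obtain n where i: "i = n + 2"
    by (metis add.commute le_Suc_ex not_less)
  have "(\<Sum>(a, b, c)\<in>{(a, b, c). a + b + c + 2 = i}. f (a + c) b + f b (a + c)) =
        (\<Sum>(e, b)\<in>{(e, b). e + b = n}. of_nat (Suc e) * f e b) +
        (\<Sum>(e, b)\<in>{(e, b). e + b = n}. of_nat (Suc e) * f b e)"
    unfolding i sum_triples_merge_outer[symmetric] sum.distrib[symmetric]
    by (simp add: case_prod_unfold)
  also have "(\<Sum>(e, b)\<in>{(e, b). e + b = n}. of_nat (Suc e) * f b e) =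
             (\<Sum>(e, b)\<in>{(e, b). e + b = n}. of_nat (Suc b) * f e b)"
    by (rule sum_antidiagonal_swap)
  also have "(\<Sum>(e, b)\<in>{(e, b). e + b = n}. of_nat (Suc e) * f e b) + \<dots> =
             (\<Sum>(e, b)\<in>{(e, b). e + b = n}. of_nat i * f e b)"
    unfolding sum.distrib[symmetric] i
    by (rule sum.cong) (auto simp: algebra_simps)
  finally show ?thesis
    using i by (simp add: sum_distrib_left case_prod_unfold)
qed

lemma sum_coeff_pderiv:
  fixes F :: "nat \<Rightarrow> 'c::{comm_semiring_1,semiring_no_zero_divisors,semiring_char_0}"
  shows "(\<Sum>j\<le>degree (pderiv p). coeff (pderiv p) j * F j) =
         (\<Sum>i\<le>degree p. coeff p i * (of_nat i * F (i - 1)))"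
proof -
  have "(\<Sum>i\<le>degree p. coeff p i * (of_nat i * F (i - 1))) =
        (\<Sum>i\<le>Suc (degree p). coeff p i * (of_nat i * F (i - 1)))"
    by (simp add: coeff_eq_0)
  also have "\<dots> = (\<Sum>j\<le>degree p. coeff (pderiv p) j * F j)"
    by (subst sum.atMost_Suc_shift) (simp add: coeff_pderiv mult_ac)
  also have "\<dots> = (\<Sum>j\<le>degree (pderiv p). coeff (pderiv p) j * F j)"
    by (rule sum.mono_neutral_right) (auto simp: degree_pderiv coeff_eq_0)
  finally show ?thesis ..
qed

lemma trace_sum_power_sandwich:
  fixes \<tau> :: "'a::monoid_mult \<Rightarrow> 'c::semiring_1"
  assumes cyclic: "\<And>x y. \<tau> (x * y) = \<tau> (y * x)"
  shows "(\<Sum>(d1, d2)\<in>{(d1, d2). d1 + d2 + 1 = i}. \<tau> (m ^ d1 * k * m ^ d2)) =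
         of_nat i * \<tau> (m ^ (i - 1) * k)"
proof (cases i)
  case (Suc n)
  have "\<tau> (m ^ a * k * m ^ (n - a)) = \<tau> (m ^ n * k)" if "a \<le> n" for a
    using cyclic that by (metis mult.assoc power_add le_add_diff_inverse2)
  then show ?thesis
    using Suc sum_antidiagonal[of "\<lambda>d1 d2. \<tau> (m ^ d1 * k * m ^ d2)" n] by simp
qed simp

lemma trace_nc_deriv_hash:
  assumes "complex_alg sA" and "clinear_fun sA (*) \<tau>"
    and cyclic: "\<And>x y. \<tau> (x * y) = \<tau> (y * x)"
  shows "\<tau> (nc_deriv_hash sA p m k) = \<tau> (poly_eval sA (pderiv p) m * k)"
proof -
  interpret additive \<tau>
    using assms(2) by unfold_locales (simp add: clinear_fun_def)
  have scale: "\<tau> (sA c x) = c * \<tau> x" for c x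
    using assms(2) by (simp add: clinear_fun_def)
  have scale_mult: "sA c x * y = sA c (x * y)" for c x y
    using assms(1) by (simp add: complex_alg_def)
  have "\<tau> (nc_deriv_hash sA p m k) =
        (\<Sum>i\<le>degree p. coeff p i *
           (\<Sum>(d1, d2)\<in>{(d1, d2). d1 + d2 + 1 = i}. \<tau> (m ^ d1 * k * m ^ d2)))"
    by (simp only: nc_deriv_hash_def sum scale prod.case_distrib)
  also have "\<dots> = (\<Sum>i\<le>degree p. coeff p i * (of_nat i * \<tau> (m ^ (i - 1) * k)))"
    by (simp only: trace_sum_power_sandwich[of \<tau>, OF cyclic])
  also have "\<dots> = (\<Sum>j\<le>degree (pderiv p). coeff (pderiv p) j * \<tau> (m ^ j * k))"
    by (rule sum_coeff_pderiv[symmetric])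
  also have "\<dots> = \<tau> (poly_eval sA (pderiv p) m * k)"
    by (simp add: poly_eval_def sum_distrib_right sum scale scale_mult)
  finally show ?thesis .
qed

lemma continuous_on_eq_on_dense:
  fixes f g :: "'a::topological_space \<Rightarrow> 'b::t2_space"
  assumes "closure S = UNIV" "continuous_on UNIV f" "continuous_on UNIV g"
    and "\<And>x. x \<in> S \<Longrightarrow> f x = g x"
  shows "f x = g x"
proof -
  have "closure S \<subseteq> {x. f x = g x}"
    using assms(4) by (intro closure_minimal closed_Collect_eq assms(2,3)) auto
  then show ?thesis
    using assms(1) by auto
qed

lemma alg_tensor_induct [consumes 1, case_names ten zero add]:
  assumes "x \<in> alg_tensor ten"
    and "\<And>a b. P (ten a b)" "P 0" "\<And>x y. P x \<Longrightarrow> P y \<Longrightarrow> P (x + y)"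
  shows "P x"
proof -
  obtain xs where "x = sum_list (map (\<lambda>(a, b). ten a b) xs)"
    using assms(1) unfolding alg_tensor_def by auto
  then show ?thesis
    by (induction xs arbitrary: x) (auto simp: assms(2-4))
qed

locale vn_tensor =
  fixes sA :: "complex \<Rightarrow> 'a::ring_1 \<Rightarrow> 'a" and \<tau> :: "'a \<Rightarrow> complex"
    and sB :: "complex \<Rightarrow> 'b::{ring_1,t2_space} \<Rightarrow> 'b" and ten :: "'a \<Rightarrow> 'a \<Rightarrow> 'b"
    and \<tau>2 :: "'b \<Rightarrow> complex" and flip :: "'b \<Rightarrow> 'b"
  assumes vn_tensor_op: "vn_tensor_op sA \<tau> sB ten \<tau>2 flip"
begin

lemma ten_mult: "ten a b * ten a' b' = ten (a * a') (b' * b)"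
  and ten_one: "ten 1 1 = 1"
  and dense: "closure (alg_tensor ten) = UNIV"
  and continuous_mult_left: "continuous_on UNIV (\<lambda>x. x * y)"
  and continuous_mult_right: "continuous_on UNIV (\<lambda>x. y * x)"
  and scale_mult_left: "sB c x * y = sB c (x * y)"
  and scale_mult_right: "x * sB c y = sB c (x * y)"
  and trace_add: "\<tau>2 (x + y) = \<tau>2 x + \<tau>2 y"
  and trace_scale: "\<tau>2 (sB c x) = c * \<tau>2 x"
  and trace_commute: "\<tau>2 (x * y) = \<tau>2 (y * x)"
  and trace_ten: "\<tau>2 (ten a b) = \<tau> a * \<tau> b"
  and continuous_trace: "continuous_on UNIV \<tau>2"
  and flip_add: "flip (x + y) = flip x + flip y"
  and flip_ten: "flip (ten a b) = ten b a"
  and continuous_flip: "continuous_on UNIV flip"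
  using vn_tensor_op unfolding vn_tensor_op_def clinear_fun_def complex_alg_def by metis+

sublocale trace: additive \<tau>2
  by unfold_locales (rule trace_add)

sublocale flip: additive flip
  by unfold_locales (rule flip_add)

lemma additive_eqI:
  fixes f g :: "'b \<Rightarrow> 'c::{ab_group_add,t2_space}"
  assumes "Modules.additive f" "Modules.additive g" "continuous_on UNIV f" "continuous_on UNIV g"
    and "\<And>a b. f (ten a b) = g (ten a b)"
  shows "f x = g x"
proof (rule continuous_on_eq_on_dense[OF dense assms(3,4)])
  fix x assume "x \<in> alg_tensor ten"
  then show "f x = g x"
    by (induction rule: alg_tensor_induct)
      (simp_all add: assms(5) additive.zero[OF assms(1)] additive.zero[OF assms(2)]
        additive.add[OF assms(1)] additive.add[OF assms(2)])
qed

lemma flip_flip: "flip (flip x) = x"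
  by (rule additive_eqI)
    (auto intro!: additive.intro continuous_on_compose2[OF continuous_flip continuous_flip]
      simp: flip.add flip_ten)

lemma trace_flip: "\<tau>2 (flip x) = \<tau>2 x"
  by (rule additive_eqI)
    (auto intro!: additive.intro continuous_on_compose2[OF continuous_trace continuous_flip]
      continuous_trace simp: flip.add trace.add flip_ten trace_ten)

lemma flip_mult: "flip (x * y) = flip y * flip x"
proof -
  have flip_ten_mult: "flip (ten a b * y) = flip y * flip (ten a b)" for a b y
    by (rule additive_eqI[where f="\<lambda>y. flip (ten a b * y)"])
      (auto intro!: additive.intro continuous_on_compose2[OF continuous_flip continuous_mult_right]
        continuous_on_compose2[OF continuous_mult_left continuous_flip]
        simp: flip.add flip_ten ten_mult distrib_left distrib_right)
  show ?thesis
    by (rule additive_eqI[where f="\<lambda>x. flip (x * y)"])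
      (auto intro!: additive.intro continuous_on_compose2[OF continuous_flip continuous_mult_left]
        continuous_on_compose2[OF continuous_mult_right continuous_flip]
        simp: flip.add flip_ten_mult distrib_left distrib_right)
qed

lemma ten_left_power: "ten a 1 ^ n = ten (a ^ n) 1"
  by (induction n) (simp_all add: ten_one ten_mult)

lemma ten_right_power: "ten 1 b ^ n = ten 1 (b ^ n)"
  by (induction n) (simp_all add: ten_one ten_mult power_commutes)

lemma trace_ten_sandwich:
  "\<tau>2 (ten a 1 * (u * flip v + v * flip u) * ten 1 b) =
   \<tau>2 (flip v * ten a b * u) + \<tau>2 (flip v * ten b a * u)"
proof -
  have cyclic_part: "\<tau>2 (ten a 1 * u * flip v * ten 1 b) = \<tau>2 (flip v * ten a b * u)" for a b
  proof -
    have "\<tau>2 (ten a 1 * u * (flip v * ten 1 b)) = \<tau>2 (flip v * (ten 1 b * ten a 1) * u)"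
      by (subst trace_commute) (simp add: mult.assoc)
    then show ?thesis
      by (simp add: mult.assoc ten_mult)
  qed
  have "\<tau>2 (ten a 1 * v * flip u * ten 1 b) = \<tau>2 (flip (ten a 1 * v * flip u * ten 1 b))"
    by (rule trace_flip[symmetric])
  also have "\<dots> = \<tau>2 (ten b 1 * u * flip v * ten 1 a)"
    by (simp add: flip_mult flip_flip flip_ten mult.assoc)
  finally show ?thesis
    using cyclic_part[of a b] cyclic_part[of b a]
    by (simp add: distrib_left distrib_right trace.add mult.assoc)
qed

lemma trace_Delta_term:
  "\<tau>2 (ten 1 1 * ten m 1 ^ d1 * (u * flip v + v * flip u) * ten 1 m ^ d2 * ten m 1 ^ d3) =
   \<tau>2 (flip v * ten (m ^ (d1 + d3)) (m ^ d2) * u) + \<tau>2 (flip v * ten (m ^ d2) (m ^ (d1 + d3)) * u)"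
proof -
  let ?W = "u * flip v + v * flip u"
  have "\<tau>2 (ten 1 1 * ten m 1 ^ d1 * ?W * ten 1 m ^ d2 * ten m 1 ^ d3) =
        \<tau>2 (ten (m ^ d3) 1 * (ten (m ^ d1) 1 * ?W * ten 1 (m ^ d2)))"
    by (subst trace_commute) (simp add: ten_one ten_left_power ten_right_power)
  also have "\<dots> = \<tau>2 (ten (m ^ (d1 + d3)) 1 * ?W * ten 1 (m ^ d2))"
    by (simp add: mult.assoc[symmetric] ten_mult power_add[symmetric] add.commute)
  finally show ?thesis
    by (simp only: trace_ten_sandwich)
qed

lemma trace_sandwich_nc_deriv:
  "\<tau>2 (x * nc_deriv sB ten g m * y) =
   (\<Sum>i\<le>degree g. coeff g i *
      (\<Sum>(d1, d2)\<in>{(d1, d2). d1 + d2 + 1 = i}. \<tau>2 (x * ten (m ^ d1) (m ^ d2) * y)))"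
  by (simp add: nc_deriv_def sum_distrib_left sum_distrib_right trace.sum trace_scale
      scale_mult_left scale_mult_right case_prod_unfold)

lemma trace_Delta:
  assumes "is_Delta \<tau> ten \<tau>2 flip u v p m d"
  shows "\<tau> d = \<tau>2 (flip v * nc_deriv sB ten (pderiv p) m * u)"
proof -
  define T where "T e1 e2 = \<tau>2 (flip v * ten (m ^ e1) (m ^ e2) * u)" for e1 e2
  have "\<tau> d = Delta_rhs ten \<tau>2 flip u v p m 1"
    using assms unfolding is_Delta_def by (metis mult_1)
  also have "\<dots> = (\<Sum>i\<le>degree p. coeff p i *
      (of_nat i * (\<Sum>(e1, e2)\<in>{(e1, e2). e1 + e2 + 1 = i - 1}. T e1 e2)))"
    unfolding Delta_rhs_def trace_Delta_term T_def[symmetric]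
    by (simp only: sum_triples_symmetrized)
  also have "\<dots> = (\<Sum>j\<le>degree (pderiv p). coeff (pderiv p) j *
      (\<Sum>(e1, e2)\<in>{(e1, e2). e1 + e2 + 1 = j}. T e1 e2))"
    by (rule sum_coeff_pderiv[symmetric])
  also have "\<dots> = \<tau>2 (flip v * nc_deriv sB ten (pderiv p) m * u)"
    unfolding trace_sandwich_nc_deriv T_def ..
  finally show ?thesis .
qed

end

theorem lemma3p5p6:
  fixes sA :: "complex \<Rightarrow> 'a::ring_1 \<Rightarrow> 'a" and st :: "'a \<Rightarrow> 'a" and \<tau> :: "'a \<Rightarrow> complex"
    and sB :: "complex \<Rightarrow> 'b::{ring_1,t2_space} \<Rightarrow> 'b" and ten :: "'a \<Rightarrow> 'a \<Rightarrow> 'b"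
    and \<tau>2 :: "'b \<Rightarrow> complex" and flip :: "'b \<Rightarrow> 'b"
    and p :: "complex poly" and m k d :: 'a and u v :: 'b
  assumes "star_alg sA st"
    and "faithful_tracial_state sA st \<tau>"
    and "vn_tensor_op sA \<tau> sB ten \<tau>2 flip"
    and "is_Delta \<tau> ten \<tau>2 flip u v p m d"
  shows "\<tau> (nc_deriv_hash sA p m k) = \<tau> (poly_eval sA (pderiv p) m * k) \<and>
         \<tau> d = \<tau>2 (flip v * nc_deriv sB ten (pderiv p) m * u)"
proof -
  interpret vn_tensor sA \<tau> sB ten \<tau>2 flip
    by (rule vn_tensor.intro) (rule assms(3))
  have "complex_alg sA"
    using assms(1) by (simp add: star_alg_def)
  moreover have "clinear_fun sA (*) \<tau>" and "\<And>x y. \<tau> (x * y) = \<tau> (y * x)"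
    using assms(2) by (simp_all add: faithful_tracial_state_def)
  ultimately show ?thesis
    using trace_nc_deriv_hash trace_Delta[OF assms(4)] by blast
qed

end
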